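(* Let $\mathcal H$ be a Hilbert space, and let $a,b$ be operators on $\mathcal H$ together with a dense subspace $\mathcal D$ of $\mathcal H$ such that $a^\sharp\mathcal D\subseteq\mathcal D$ and $b^\sharp\mathcal D\subseteq\mathcal D$ (where $x^\sharp$ denotes $x$ or $x^\dagger$), and $abf-baf=f$ for all $f\in\mathcal D$. Assume there is a nonzero $\varphi_0\in\mathcal D$ with $a\varphi_0=0$, and set $\varphi_n=\frac{1}{\sqrt{n!}}b^n\varphi_0$, $n\ge 0$, and $\mathcal L_\varphi=\operatorname{span}\{\varphi_n:n\ge0\}$ (finite linear combinations). For $\gamma\in\mathbb C$ let $\sigma_1=e^{\gamma a}$ and $\sigma_2=e^{\gamma b}$ be defined as the series $\sigma_1 f=\sum_{k\ge0}\frac{(\gamma a)^k}{k!}f$ and $\sigma_2 f=\sum_{k\ge0}\frac{(\gamma b)^k}{k!}f$, with domain the set of vectors $f$ for which the series converges in $\mathcal H$. Then $D(\sigma_1)\supseteq\mathcal L_\varphi$. Moreover, if there exist $r_\varphi>0$ and $\alpha_\varphi\in[0,\tfrac12)$ with $\|\varphi_n\|\le r_\varphi^n(n!)^{\alpha_\varphi}$ for all $n\ge0$, then $D(\sigma_2)\supseteq\mathcal L_\varphi$.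
   Context: Standard facts in this setting: $a\varphi_0=0$, $a\varphi_n=\sqrt n\,\varphi_{n-1}$ for $n\ge1$, $b\varphi_n=\sqrt{n+1}\,\varphi_{n+1}$, and all $\varphi_n\in\mathcal D$. *)

theory Defs
  imports "HOL-Analysis.Analysis"
begin

text \<open>The library has no class of complex vector spaces, so a complex Hilbert space is modelled
  as a (real) Banach space 'h together with a complex scalar multiplication sm extending the
  real one, and a complex inner product ip inducing the norm.
  Convention: ip is conjugate-linear in the first argument, linear in the second.\<close>
definition is_complex_hilbert ::
  "(complex \<Rightarrow> 'h::banach \<Rightarrow> 'h) \<Rightarrow> ('h \<Rightarrow> 'h \<Rightarrow> complex) \<Rightarrow> bool" where
  "is_complex_hilbert sm ip \<longleftrightarrow>
     (\<forall>c x y. sm c (x + y) = sm c x + sm c y) \<and>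
     (\<forall>c d x. sm (c + d) x = sm c x + sm d x) \<and>
     (\<forall>c d x. sm (c * d) x = sm c (sm d x)) \<and>
     (\<forall>r x. sm (complex_of_real r) x = r *\<^sub>R x) \<and>
     (\<forall>c x. norm (sm c x) = cmod c * norm x) \<and>
     (\<forall>x y z. ip x (y + z) = ip x y + ip x z) \<and>
     (\<forall>x y c. ip x (sm c y) = c * ip x y) \<and>
     (\<forall>x y. ip y x = cnj (ip x y)) \<and>
     (\<forall>x. ip x x = complex_of_real ((norm x)\<^sup>2))"

definition csubspace :: "(complex \<Rightarrow> 'h::banach \<Rightarrow> 'h) \<Rightarrow> 'h set \<Rightarrow> bool" where
  "csubspace sm D \<longleftrightarrow> 0 \<in> D \<and> (\<forall>f\<in>D. \<forall>g\<in>D. f + g \<in> D) \<and> (\<forall>c. \<forall>f\<in>D. sm c f \<in> D)"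

definition cspan :: "(complex \<Rightarrow> 'h::banach \<Rightarrow> 'h) \<Rightarrow> 'h set \<Rightarrow> 'h set" where
  "cspan sm S = {x. \<exists>F c. finite F \<and> F \<subseteq> S \<and> x = (\<Sum>v\<in>F. sm (c v) v)}"

definition linear_on :: "(complex \<Rightarrow> 'h::banach \<Rightarrow> 'h) \<Rightarrow> 'h set \<Rightarrow> ('h \<Rightarrow> 'h) \<Rightarrow> bool" where
  "linear_on sm D T \<longleftrightarrow> (\<forall>f\<in>D. \<forall>g\<in>D. \<forall>c. T (sm c f + g) = sm c (T f) + T g)"

text \<open>The adjoint of T (an operator with domain D) is defined on all of D and maps D into D:
  for every g in D there is h in D with ip g (T f) = ip h f for all f in D (h = T-dagger g).\<close>
definition adjoint_preserves :: "('h \<Rightarrow> 'h \<Rightarrow> complex) \<Rightarrow> 'h set \<Rightarrow> ('h \<Rightarrow> 'h) \<Rightarrow> bool" where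
  "adjoint_preserves ip D T \<longleftrightarrow> (\<forall>g\<in>D. \<exists>h\<in>D. \<forall>f\<in>D. ip g (T f) = ip h f)"

definition exp_dom ::
  "(complex \<Rightarrow> 'h::banach \<Rightarrow> 'h) \<Rightarrow> 'h set \<Rightarrow> ('h \<Rightarrow> 'h) \<Rightarrow> complex \<Rightarrow> 'h set" where
  "exp_dom sm D T \<gamma> = {f. (\<forall>k. (T ^^ k) f \<in> D) \<and>
      summable (\<lambda>k. sm (\<gamma> ^ k / fact k) ((T ^^ k) f))}"

end

theory Submission
  imports Defs "HOL-Real_Asymp.Real_Asymp"
begin

text \<open>The span of the number vectors lies in the domain of e^{\<gamma> a} because a is a lowering
  operator: by the commutation relation a b^{n+1} \<phi>0 = (n+1) b^n \<phi>0, so a^{n+1} kills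
  b^n \<phi>0 and the exponential series terminates on each number vector.
  For e^{\<gamma> b} one has b^k \<phi>_n = sqrt((n+k)!/n!) \<phi>_{n+k}, so the growth bound
  on the number vectors dominates the k-th term of the series by
  r^n (|\<gamma>| r)^k ((n+k)!)^{1/2+\<alpha>} / k!, which is summable by the ratio test since 1/2+\<alpha> < 1.
  Both claims extend from the generators to their span by linearity.\<close>

lemma funpow_in_invariant: "T ` D \<subseteq> D \<Longrightarrow> f \<in> D \<Longrightarrow> (T ^^ k) f \<in> D"
  by (induction k) auto

lemma summable_power_fact_powr_div_fact:
  fixes x \<beta> :: real
  assumes "0 \<le> x" "\<beta> < 1"
  shows "summable (\<lambda>k. x ^ k * fact (k + n) powr \<beta> / fact k)"
proof -
  define q where "q k = x * (real k + real n + 1) powr \<beta> / (real k + 1)" for k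
  have "q \<longlonglongrightarrow> 0"
    unfolding q_def using assms(2) by real_asymp
  then obtain N where N: "\<And>k. k \<ge> N \<Longrightarrow> q k < 1/2"
    using order_tendstoD(2)[of q 0 sequentially "1/2"] by (auto simp: eventually_sequentially)
  show ?thesis
  proof (rule summable_ratio_test[of "1/2" N])
    fix k
    assume "k \<ge> N"
    have "fact (Suc k + n) = (real k + real n + 1) * (fact (k + n) :: real)"
      by (simp add: algebra_simps)
    then have "fact (Suc k + n) powr \<beta> = (real k + real n + 1) powr \<beta> * fact (k + n) powr \<beta>"
      by (simp add: powr_mult add_ac)
    then have "x ^ Suc k * fact (Suc k + n) powr \<beta> / fact (Suc k)
               = q k * (x ^ k * fact (k + n) powr \<beta> / fact k)"
      by (simp add: q_def field_simps)
    also have "\<dots> \<le> 1/2 * (x ^ k * fact (k + n) powr \<beta> / fact k)"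
      using N[OF \<open>k \<ge> N\<close>] assms(1) by (intro mult_right_mono) auto
    finally show "norm (x ^ Suc k * fact (Suc k + n) powr \<beta> / fact (Suc k))
                  \<le> 1/2 * norm (x ^ k * fact (k + n) powr \<beta> / fact k)"
      using assms(1) by simp
  qed simp
qed

locale complex_hilbert =
  fixes sm :: "complex \<Rightarrow> 'h::banach \<Rightarrow> 'h" and ip :: "'h \<Rightarrow> 'h \<Rightarrow> complex"
  assumes hilbert: "is_complex_hilbert sm ip"
begin

lemma sm_add_right: "sm c (x + y) = sm c x + sm c y"
  and sm_mult: "sm (c * d) x = sm c (sm d x)"
  and sm_of_real: "sm (complex_of_real r) x = r *\<^sub>R x"
  and norm_sm: "norm (sm c x) = cmod c * norm x"
  using hilbert unfolding is_complex_hilbert_def by auto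

lemma sm_zero_right [simp]: "sm c 0 = 0"
  using norm_sm[of c 0] by simp

lemma sm_one [simp]: "sm 1 x = x"
  using sm_of_real[of 1 x] by simp

lemma sm_commute: "sm c (sm d x) = sm d (sm c x)"
  by (metis sm_mult mult.commute)

lemma sm_sum_right: "sm c (\<Sum>v\<in>F. f v) = (\<Sum>v\<in>F. sm c (f v))"
  by (induction F rule: infinite_finite_induct) (auto simp: sm_add_right)

lemma csubspace_zero: "csubspace sm D \<Longrightarrow> 0 \<in> D"
  by (simp add: csubspace_def)

lemma csubspace_scaleR: "csubspace sm D \<Longrightarrow> x \<in> D \<Longrightarrow> r *\<^sub>R x \<in> D"
  by (metis csubspace_def sm_of_real)

lemma csubspace_sum_sm:
  assumes "csubspace sm D" "finite F" "F \<subseteq> D"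
  shows "(\<Sum>v\<in>F. sm (c v) v) \<in> D"
  using assms(2,3) by (induction F rule: finite_induct) (use assms(1) in \<open>auto simp: csubspace_def\<close>)

context
  fixes D :: "'h set" and T :: "'h \<Rightarrow> 'h"
  assumes subspace: "csubspace sm D" and linear: "linear_on sm D T"
begin

lemma linear_on_add: "f \<in> D \<Longrightarrow> g \<in> D \<Longrightarrow> T (f + g) = T f + T g"
  using linear unfolding linear_on_def by (metis sm_one)

lemma linear_on_zero: "T 0 = 0"
  using linear_on_add[of 0 0] csubspace_zero[OF subspace] by simp

lemma linear_on_sm: "f \<in> D \<Longrightarrow> T (sm c f) = sm c (T f)"
  using linear csubspace_zero[OF subspace] linear_on_zero unfolding linear_on_def
  by (metis add.right_neutral)

lemma linear_on_scaleR: "f \<in> D \<Longrightarrow> T (r *\<^sub>R f) = r *\<^sub>R T f"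
  using linear_on_sm[of f "complex_of_real r"] by (simp add: sm_of_real)

lemma linear_on_sum_sm:
  assumes "finite F" "F \<subseteq> D"
  shows "T (\<Sum>v\<in>F. sm (c v) v) = (\<Sum>v\<in>F. sm (c v) (T v))"
  using assms
proof (induction F rule: finite_induct)
  case empty
  then show ?case using linear_on_zero by simp
next
  case (insert x F)
  then have "sm (c x) x \<in> D" "(\<Sum>v\<in>F. sm (c v) v) \<in> D"
    using subspace csubspace_sum_sm by (auto simp: csubspace_def)
  with insert show ?case
    by (simp add: linear_on_add linear_on_sm)
qed

lemma linear_on_funpow:
  assumes invariant: "T ` D \<subseteq> D"
  shows "linear_on sm D (T ^^ k)"
proof (induction k)
  case 0
  then show ?case by (simp add: linear_on_def)
next
  case (Suc k)
  show ?case
    unfolding linear_on_def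
  proof (intro ballI allI)
    fix f g c
    assume "f \<in> D" "g \<in> D"
    then show "(T ^^ Suc k) (sm c f + g) = sm c ((T ^^ Suc k) f) + (T ^^ Suc k) g"
      using Suc linear funpow_in_invariant[OF invariant] unfolding linear_on_def by simp
  qed
qed

end

text \<open>The k-th term of the series at a linear combination is bounded by the corresponding
  combination of the norms of the k-th terms at the generators.\<close>
lemma cspan_subset_exp_dom:
  assumes subspace: "csubspace sm D" and linear: "linear_on sm D T"
    and invariant: "T ` D \<subseteq> D" and "S \<subseteq> D"
    and summable_generator:
      "\<And>v. v \<in> S \<Longrightarrow> summable (\<lambda>k. norm (sm (\<gamma> ^ k / fact k) ((T ^^ k) v)))"
  shows "cspan sm S \<subseteq> exp_dom sm D T \<gamma>"
proof
  fix x
  assume "x \<in> cspan sm S"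
  then obtain F c where F: "finite F" "F \<subseteq> S" and x: "x = (\<Sum>v\<in>F. sm (c v) v)"
    unfolding cspan_def by blast
  have "F \<subseteq> D" using F \<open>S \<subseteq> D\<close> by auto
  then have "x \<in> D"
    using csubspace_sum_sm[OF subspace F(1)] x by simp
  define t where "t v k = sm (\<gamma> ^ k / fact k) ((T ^^ k) v)" for v k
  have "t x k = (\<Sum>v\<in>F. sm (c v) (t v k))" for k
    using linear_on_sum_sm[OF subspace linear_on_funpow[OF subspace linear invariant] F(1) \<open>F \<subseteq> D\<close>]
    by (simp add: t_def x sm_sum_right sm_commute)
  then have bound: "norm (t x k) \<le> (\<Sum>v\<in>F. cmod (c v) * norm (t v k))" for k
    by (metis (no_types, lifting) norm_sm norm_sum sum.cong)
  have "summable (\<lambda>k. \<Sum>v\<in>F. cmod (c v) * norm (t v k))"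
    using F(2) summable_generator by (intro summable_sum summable_mult) (auto simp: t_def)
  then have "summable (\<lambda>k. t x k)"
    using bound by (intro summable_comparison_test[of "t x"]) auto
  then show "x \<in> exp_dom sm D T \<gamma>"
    using funpow_in_invariant[OF invariant \<open>x \<in> D\<close>] by (simp add: exp_dom_def t_def)
qed

end

locale ccr_vacuum = complex_hilbert +
  fixes D :: "'h::banach set" and a b :: "'h \<Rightarrow> 'h" and \<phi>0 :: 'h
  assumes subspace: "csubspace sm D"
    and linear_a: "linear_on sm D a" and linear_b: "linear_on sm D b"
    and a_invariant: "a ` D \<subseteq> D" and b_invariant: "b ` D \<subseteq> D"
    and ccr: "\<forall>f\<in>D. a (b f) - b (a f) = f"
    and vacuum_in: "\<phi>0 \<in> D" and lowering_vacuum: "a \<phi>0 = 0"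
begin

definition number_vector :: "nat \<Rightarrow> 'h" where
  "number_vector n = (1 / sqrt (fact n)) *\<^sub>R (b ^^ n) \<phi>0"

lemma raising_pow_vacuum_in: "(b ^^ n) \<phi>0 \<in> D"
  using funpow_in_invariant[OF b_invariant vacuum_in] .

lemma linear_on_lowering_pow: "linear_on sm D (a ^^ k)"
  using linear_on_funpow[OF subspace linear_a a_invariant] .

lemma linear_on_raising_pow: "linear_on sm D (b ^^ k)"
  using linear_on_funpow[OF subspace linear_b b_invariant] .

lemma number_vector_in: "number_vector n \<in> D"
  unfolding number_vector_def using subspace raising_pow_vacuum_in by (rule csubspace_scaleR)

lemma lowering_raising: "f \<in> D \<Longrightarrow> a (b f) = f + b (a f)"
  using ccr by (metis add.commute diff_eq_eq)

lemma lowering_raising_pow_vacuum: "a ((b ^^ Suc n) \<phi>0) = real (Suc n) *\<^sub>R (b ^^ n) \<phi>0"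
proof (induction n)
  case 0
  show ?case
    using lowering_raising[OF vacuum_in] lowering_vacuum linear_on_zero[OF subspace linear_b] by simp
next
  case (Suc n)
  have "a ((b ^^ Suc (Suc n)) \<phi>0) = (b ^^ Suc n) \<phi>0 + b (a ((b ^^ Suc n) \<phi>0))"
    by (metis comp_apply funpow.simps(2) lowering_raising raising_pow_vacuum_in)
  also have "\<dots> = (b ^^ Suc n) \<phi>0 + real (Suc n) *\<^sub>R (b ^^ Suc n) \<phi>0"
    using Suc linear_on_scaleR[OF subspace linear_b raising_pow_vacuum_in] by simp
  also have "\<dots> = real (Suc (Suc n)) *\<^sub>R (b ^^ Suc n) \<phi>0"
    by (metis of_nat_Suc scaleR_add_left scaleR_one add.commute)
  finally show ?case .
qed

lemma lowering_pow_annihilates: "(a ^^ Suc n) ((b ^^ n) \<phi>0) = 0"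
proof (induction n)
  case 0
  then show ?case using lowering_vacuum by simp
next
  case (Suc n)
  have "(a ^^ Suc (Suc n)) ((b ^^ Suc n) \<phi>0) = (a ^^ Suc n) (real (Suc n) *\<^sub>R (b ^^ n) \<phi>0)"
    by (metis comp_apply funpow_Suc_right lowering_raising_pow_vacuum)
  also have "\<dots> = real (Suc n) *\<^sub>R (a ^^ Suc n) ((b ^^ n) \<phi>0)"
    by (rule linear_on_scaleR[OF subspace linear_on_lowering_pow raising_pow_vacuum_in])
  also have "\<dots> = 0"
    by (simp only: Suc.IH scaleR_zero_right)
  finally show ?case .
qed

lemma lowering_pow_number_vector: "n < k \<Longrightarrow> (a ^^ k) (number_vector n) = 0"
proof -
  assume "n < k"
  then have "k = (k - Suc n) + Suc n" by simp
  then have "(a ^^ k) ((b ^^ n) \<phi>0) = (a ^^ (k - Suc n)) ((a ^^ Suc n) ((b ^^ n) \<phi>0))"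
    by (metis comp_apply funpow_add)
  then show ?thesis
    using lowering_pow_annihilates linear_on_zero[OF subspace linear_on_lowering_pow]
      linear_on_scaleR[OF subspace linear_on_lowering_pow raising_pow_vacuum_in]
    by (simp add: number_vector_def)
qed

lemma raising_pow_number_vector:
  "(b ^^ k) (number_vector n) = (sqrt (fact (k + n)) / sqrt (fact n)) *\<^sub>R number_vector (k + n)"
  using linear_on_scaleR[OF subspace linear_on_raising_pow raising_pow_vacuum_in]
  by (simp add: number_vector_def funpow_add)

lemma number_span_subset_exp_dom_lowering:
  "cspan sm (range number_vector) \<subseteq> exp_dom sm D a \<gamma>"
proof (rule cspan_subset_exp_dom[OF subspace linear_a a_invariant])
  show "range number_vector \<subseteq> D"
    using number_vector_in by blast
  fix v
  assume "v \<in> range number_vector"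
  then obtain n where "v = number_vector n" by blast
  then show "summable (\<lambda>k. norm (sm (\<gamma> ^ k / fact k) ((a ^^ k) v)))"
    using lowering_pow_number_vector by (intro summable_finite[of "{..n}"]) auto
qed

lemma number_span_subset_exp_dom_raising:
  assumes "0 \<le> r" "\<alpha> < 1/2" and growth: "\<forall>n. norm (number_vector n) \<le> r ^ n * fact n powr \<alpha>"
  shows "cspan sm (range number_vector) \<subseteq> exp_dom sm D b \<gamma>"
proof (rule cspan_subset_exp_dom[OF subspace linear_b b_invariant])
  show "range number_vector \<subseteq> D"
    using number_vector_in by blast
  fix v
  assume "v \<in> range number_vector"
  then obtain n where v: "v = number_vector n" by blast
  have "norm (sm (\<gamma> ^ k / fact k) ((b ^^ k) v))
        \<le> r ^ n * ((cmod \<gamma> * r) ^ k * fact (k + n) powr (1/2 + \<alpha>) / fact k)" for k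
  proof -
    have "norm ((b ^^ k) v) = sqrt (fact (k + n)) / sqrt (fact n) * norm (number_vector (k + n))"
      by (simp add: v raising_pow_number_vector)
    also have "\<dots> \<le> sqrt (fact (k + n)) * norm (number_vector (k + n))"
      by (intro mult_right_mono) (auto simp: divide_le_eq)
    also have "\<dots> \<le> sqrt (fact (k + n)) * (r ^ (k + n) * fact (k + n) powr \<alpha>)"
      using growth by (intro mult_left_mono) auto
    also have "\<dots> = r ^ (k + n) * fact (k + n) powr (1/2 + \<alpha>)"
      by (simp add: powr_add powr_half_sqrt)
    finally have norm_raised: "norm ((b ^^ k) v) \<le> r ^ (k + n) * fact (k + n) powr (1/2 + \<alpha>)" .
    have "norm (sm (\<gamma> ^ k / fact k) ((b ^^ k) v)) = cmod \<gamma> ^ k / fact k * norm ((b ^^ k) v)"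
      by (simp add: norm_sm norm_divide norm_power)
    also have "\<dots> \<le> cmod \<gamma> ^ k / fact k * (r ^ (k + n) * fact (k + n) powr (1/2 + \<alpha>))"
      using norm_raised by (rule mult_left_mono) simp
    also have "\<dots> = r ^ n * ((cmod \<gamma> * r) ^ k * fact (k + n) powr (1/2 + \<alpha>) / fact k)"
      by (simp add: power_add power_mult_distrib)
    finally show ?thesis .
  qed
  moreover have "summable (\<lambda>k. r ^ n * ((cmod \<gamma> * r) ^ k * fact (k + n) powr (1/2 + \<alpha>) / fact k))"
    using assms(1,2) by (intro summable_mult summable_power_fact_powr_div_fact) auto
  ultimately show "summable (\<lambda>k. norm (sm (\<gamma> ^ k / fact k) ((b ^^ k) v)))"
    by (intro summable_comparison_test[of "\<lambda>k. norm (sm (\<gamma> ^ k / fact k) ((b ^^ k) v))"]) auto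
qed

end

theorem mainTheorem1:
  fixes sm :: "complex \<Rightarrow> 'h::banach \<Rightarrow> 'h" and ip :: "'h \<Rightarrow> 'h \<Rightarrow> complex"
    and a b :: "'h \<Rightarrow> 'h" and D :: "'h set" and \<phi>0 :: 'h and \<gamma> :: complex
  assumes hilbert: "is_complex_hilbert sm ip"
    and subsp: "csubspace sm D"
    and dense: "closure D = UNIV"
    and lin_a: "linear_on sm D a" and lin_b: "linear_on sm D b"
    and a_D: "a ` D \<subseteq> D" and b_D: "b ` D \<subseteq> D"
    and adj_a: "adjoint_preserves ip D a" and adj_b: "adjoint_preserves ip D b"
    and ccr: "\<forall>f\<in>D. a (b f) - b (a f) = f"
    and phi0_D: "\<phi>0 \<in> D" and phi0_nz: "\<phi>0 \<noteq> 0" and a_phi0: "a \<phi>0 = 0"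
  defines "\<phi> \<equiv> (\<lambda>n. (1 / sqrt (fact n)) *\<^sub>R (b ^^ n) \<phi>0)"
    and "L \<equiv> cspan sm (range (\<lambda>n. (1 / sqrt (fact n)) *\<^sub>R (b ^^ n) \<phi>0))"
  shows "L \<subseteq> exp_dom sm D a \<gamma> \<and>
         ((\<exists>r>0. \<exists>\<alpha>. 0 \<le> \<alpha> \<and> \<alpha> < 1/2 \<and> (\<forall>n. norm (\<phi> n) \<le> r ^ n * (fact n) powr \<alpha>))
            \<longrightarrow> L \<subseteq> exp_dom sm D b \<gamma>)"
proof -
  interpret ccr_vacuum sm ip D a b \<phi>0
    using assms by unfold_locales
  have number_vector: "number_vector = \<phi>"
    unfolding \<phi>_def by (simp add: number_vector_def[abs_def])
  have L: "L = cspan sm (range \<phi>)"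
    unfolding L_def \<phi>_def ..
  show ?thesis
    unfolding L
    using number_span_subset_exp_dom_lowering[unfolded number_vector]
      number_span_subset_exp_dom_raising[unfolded number_vector]
    by (meson less_imp_le)
qed

end
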